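(* Let $\Sigma$ be an alphabet with $|\Sigma|\geq 3$ and $n\geq 1$. If $g\colon\mathcal{T}(\Sigma)^n\to\mathcal{T}(\Sigma)$ is WCP and $g(\Sigma^n)\subseteq\Sigma$, then the restriction of $g$ to $\Sigma^n$ is either a constant function or a projection $\pi_i^n$ (for some $i\in\{1,\ldots,n\}$, $\pi_i^n(a_1,\ldots,a_n)=a_i$).
   Context: Let $\Sigma$ be an alphabet not containing $0,1$. A binary tree over $\Sigma$ is a finite set $t \subseteq \{0,1\}^*\Sigma$ such that for any $ua, vb \in t$ with $ua \neq vb$, $u$ is not a prefix of $v$ and $v$ is not a prefix of $u$; $\mathcal{T}(\Sigma)$ is the set of such trees, $\mathbf 0=\emptyset$, each letter $a$ is identified with $\{a\}$, and $t\star t' = 0.t\cup 1.t'$. Every map $h\colon\Sigma\to\mathcal{T}(\Sigma)$ extends uniquely to an endomorphism of $\langle\mathcal{T}(\Sigma),\star\rangle$, still denoted $h$. A function $g\colon\mathcal{T}(\Sigma)^n\to\mathcal{T}(\Sigma)$ is WCP if for every idempotent mapping $h\colon\Sigma\to\Sigma$ and all $\vec u,\vec v\in\Sigma^n$, $h(\vec u)=h(\vec v)$ implies $h(g(\vec u))=h(g(\vec v))$, where $h(\langle u_1,\ldots,u_n\rangle)=\langle h(u_1),\ldots,h(u_n)\rangle$. *)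

theory Defs
  imports Main "HOL-Library.Sublist"
begin

text \<open>A word in {0,1}*\<Sigma> is represented as a pair (u, a) with u :: bool list
  (False = 0, True = 1) and a a letter.  A binary tree is a finite prefix-free set.\<close>

type_synonym 'a tree = "(bool list \<times> 'a) set"

definition is_tree :: "'a tree \<Rightarrow> bool" where
  "is_tree t \<longleftrightarrow> finite t \<and>
     (\<forall>(u,a)\<in>t. \<forall>(v,b)\<in>t. (u,a) \<noteq> (v,b) \<longrightarrow> \<not> prefix u v \<and> \<not> prefix v u)"

definition leaf :: "'a \<Rightarrow> 'a tree" where
  "leaf a = {([], a)}"

definition tstar :: "'a tree \<Rightarrow> 'a tree \<Rightarrow> 'a tree" where
  "tstar t t' = {(False # u, a) | u a. (u,a) \<in> t} \<union> {(True # u, a) | u a. (u,a) \<in> t'}"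

text \<open>Unique star-endomorphism extending h : \<Sigma> \<Rightarrow> T(\<Sigma>) (substitution at the leaves).\<close>
definition hext :: "('a \<Rightarrow> 'a tree) \<Rightarrow> 'a tree \<Rightarrow> 'a tree" where
  "hext h t = {(u @ w, b) | u a w b. (u,a) \<in> t \<and> (w,b) \<in> h a}"

definition WCP :: "nat \<Rightarrow> ('a tree list \<Rightarrow> 'a tree) \<Rightarrow> bool" where
  "WCP n g \<longleftrightarrow> (\<forall>h :: 'a \<Rightarrow> 'a. h \<circ> h = h \<longrightarrow>
     (\<forall>u v. length u = n \<and> length v = n \<and> map h u = map h v \<longrightarrow>
        hext (leaf \<circ> h) (g (map leaf u)) = hext (leaf \<circ> h) (g (map leaf v))))"

end

theory Submission
  imports Defs
begin

text \<open>On letters, \<open>g\<close> is an \<open>n\<close>-ary operation \<open>f\<close> on \<open>\<Sigma>\<close>. Applying WCP to the idempotent map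
  that collapses a set \<open>S\<close> onto one of its points shows: if two tuples differ only inside \<open>S\<close>,
  then so do their images under \<open>f\<close>. If some value \<open>b = f F\<close> is not an entry of \<open>F\<close>,
  collapsing \<open>-{b}\<close> makes \<open>f\<close> constant on the \<open>b\<close>-free tuples, and collapsing \<open>{b, c}\<close>
  spreads this to all tuples. Otherwise \<open>f\<close> is conservative; then whether \<open>f F = a\<close> depends only
  on the set of positions where \<open>F\<close> equals \<open>a\<close>, and not on \<open>a\<close>. These decisive sets form an
  ultrafilter on \<open>{..<n}\<close>, which is principal, generated by some \<open>{k}\<close>, and \<open>f\<close> is the
  \<open>k\<close>-th projection. Both cases need a third letter, i.e. \<open>|\<Sigma>| \<ge> 3\<close>.\<close>

lemma finite_ultrafilter_principal:
  fixes W :: "'i set \<Rightarrow> bool"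
  assumes "finite U" and "W U" and "\<not> W {}"
    and Int: "\<And>I J. W I \<Longrightarrow> W J \<Longrightarrow> W (I \<inter> J)"
    and Compl: "\<And>I. W I \<or> W (- I)"
  shows "\<exists>k\<in>U. W {k}"
  using assms(1,2)
proof (induction U rule: finite_induct)
  case empty
  then show ?case using assms(3) by simp
next
  case (insert k U)
  show ?case
  proof (cases "W {k}")
    case True
    then show ?thesis by simp
  next
    case False
    then have "W (insert k U \<inter> - {k})" using insert.prems Int Compl by blast
    moreover have "insert k U \<inter> - {k} = U" using insert.hyps(2) by auto
    ultimately show ?thesis using insert.IH by auto
  qed
qed

text \<open>Tuples in \<open>\<Sigma>\<^sup>n\<close> are functions \<open>nat \<Rightarrow> 'a\<close> of which only the values below \<open>n\<close> matter.\<close>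

locale collapse_compatible =
  fixes n :: nat and f :: "(nat \<Rightarrow> 'a) \<Rightarrow> 'a"
  assumes collapse: "\<lbrakk>s \<in> S; \<forall>i<n. F i = G i \<or> F i \<in> S \<and> G i \<in> S\<rbrakk>
      \<Longrightarrow> f F = f G \<or> f F \<in> S \<and> f G \<in> S"
    and third_letter: "\<exists>c :: 'a. c \<noteq> a \<and> c \<noteq> b"
begin

lemma eq_if_same_positions:
  assumes "f F = a" and "\<forall>i<n. F i = a \<longleftrightarrow> G i = a"
  shows "f G = a"
proof -
  obtain c where "c \<noteq> a" using third_letter by blast
  moreover have "\<forall>i<n. F i = G i \<or> F i \<in> - {a} \<and> G i \<in> - {a}" using assms(2) by auto
  ultimately show ?thesis using collapse[of c "- {a}" F G] assms(1) by auto
qed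

lemma constant_if_not_conservative:
  assumes "f F \<notin> F ` {..<n}"
  shows "f G = f F"
proof -
  define b where "b = f F"
  have avoiding_b: "f H = b" if "\<forall>i<n. H i \<noteq> b" for H
  proof -
    obtain c where "c \<noteq> b" using third_letter by blast
    moreover have "\<forall>i<n. F i \<noteq> b" using assms unfolding b_def by (metis image_eqI lessThan_iff)
    then have "\<forall>i<n. F i = H i \<or> F i \<in> - {b} \<and> H i \<in> - {b}" using that by auto
    ultimately show ?thesis using collapse[of c "- {b}" F H] by (auto simp: b_def)
  qed
  have in_bc: "f G \<in> {b, c}" if "c \<noteq> b" for c
  proof -
    define H where "H i = (if G i = b then c else G i)" for i
    have "f H = b" using avoiding_b that by (auto simp: H_def)
    moreover have "\<forall>i<n. G i = H i \<or> G i \<in> {b, c} \<and> H i \<in> {b, c}" by (auto simp: H_def)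
    ultimately show ?thesis using collapse[of b "{b, c}" G H] by auto
  qed
  obtain c d where "c \<noteq> b" "d \<noteq> b" "c \<noteq> d" using third_letter by metis
  then show ?thesis using in_bc[of c] in_bc[of d] unfolding b_def by auto
qed

end

locale conservative_collapse_compatible = collapse_compatible +
  assumes conservative: "f F \<in> F ` {..<n}"
begin

lemma neutral:
  assumes "f F = a" and "\<forall>i<n. F i = a \<longleftrightarrow> G i = b"
  shows "f G = b"
proof -
  obtain c where c: "c \<noteq> a" "c \<noteq> b" using third_letter by blast
  define I where "I = {i. F i = a}"
  define A where "A i = (if i \<in> I then a else c)" for i
  define B where "B i = (if i \<in> I then b else c)" for i
  have "f A = a" using eq_if_same_positions[OF assms(1)] c by (auto simp: I_def A_def)
  moreover have "\<forall>i<n. B i = c \<longleftrightarrow> A i = c" using c by (simp add: A_def B_def)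
  ultimately have "f B \<noteq> c" using eq_if_same_positions[of B c A] c(1) by auto
  then have "f B = b" using conservative[of B] by (auto simp: B_def)
  moreover have "\<forall>i<n. B i = b \<longleftrightarrow> G i = b" using assms(2) c by (auto simp: I_def B_def)
  ultimately show ?thesis by (rule eq_if_same_positions)
qed

definition decisive :: "nat set \<Rightarrow> bool" where
  "decisive I \<longleftrightarrow> (\<forall>F a. (\<forall>i<n. F i = a \<longleftrightarrow> i \<in> I) \<longrightarrow> f F = a)"

lemma decisive_iff: "decisive {i. F i = a} \<longleftrightarrow> f F = a"
proof
  show "f F = a" if "decisive {i. F i = a}"
    using that[unfolded decisive_def, rule_format, of F a] by simp
  show "decisive {i. F i = a}" if "f F = a"
    unfolding decisive_def by (auto intro: neutral[OF that])
qed

lemma decisive_indicator: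
  assumes "a \<noteq> b"
  shows "decisive I \<longleftrightarrow> f (\<lambda>i. if i \<in> I then a else b) = a"
proof -
  have "{i. (if i \<in> I then a else b) = a} = I" using assms by auto
  then show ?thesis using decisive_iff[of "\<lambda>i. if i \<in> I then a else b" a] by metis
qed

lemma not_decisive_empty: "\<not> decisive {}"
proof -
  obtain a b :: 'a where "a \<noteq> b" using third_letter by metis
  moreover have "f (\<lambda>_. b) = b" using conservative[of "\<lambda>_. b"] by auto
  ultimately show ?thesis using decisive_indicator[of a b "{}"] by simp
qed

lemma decisive_Compl: "decisive (- I) \<longleftrightarrow> \<not> decisive I"
proof -
  obtain a b :: 'a where ab: "a \<noteq> b" using third_letter by metis
  define F where "F = (\<lambda>i. if i \<in> I then a else b)"
  have "decisive I \<longleftrightarrow> f F = a" using decisive_indicator[OF ab] by (simp add: F_def)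
  moreover have "(\<lambda>i. if i \<in> - I then b else a) = F" by (auto simp: F_def)
  then have "decisive (- I) \<longleftrightarrow> f F = b" using decisive_indicator[of b a "- I"] ab by simp
  moreover have "f F \<in> {a, b}" using conservative[of F] by (auto simp: F_def)
  ultimately show ?thesis using ab by auto
qed

lemma decisive_mono:
  assumes "I \<subseteq> J" and "decisive I"
  shows "decisive J"
proof -
  obtain a b c :: 'a where abc: "a \<noteq> b" "c \<noteq> a" "c \<noteq> b" using third_letter by metis
  define F where "F i = (if i \<in> I then a else if i \<in> J then b else c)" for i
  define G where "G = (\<lambda>i. if i \<in> J then a else c)"
  have "{i. F i = a} = I" using abc by (auto simp: F_def)
  then have "f F = a" using decisive_iff[of F a] assms(2) by simp
  moreover have "\<forall>i<n. F i = G i \<or> F i \<in> {a, b} \<and> G i \<in> {a, b}"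
    using assms(1) by (auto simp: F_def G_def)
  ultimately have "f G \<in> {a, b}" using collapse[of a "{a, b}" F G] by auto
  moreover have "f G \<in> {a, c}" using conservative[of G] by (auto simp: G_def)
  ultimately have "f G = a" using abc by auto
  then show ?thesis using decisive_indicator[of a c J] abc by (simp add: G_def)
qed

lemma decisive_Int:
  assumes "decisive I" and "decisive J"
  shows "decisive (I \<inter> J)"
proof -
  obtain a b c :: 'a where abc: "a \<noteq> b" "c \<noteq> a" "c \<noteq> b" using third_letter by metis
  define F where "F i = (if i \<in> I \<inter> J then a else if i \<in> I then b else c)" for i
  have "{i. F i = c} = - I" using abc by (auto simp: F_def)
  then have "f F \<noteq> c" using decisive_iff[of F c] decisive_Compl assms(1) by simp
  have "{i. F i = b} = I - J" using abc by (auto simp: F_def)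
  moreover have "\<not> decisive (I - J)"
    using decisive_mono[of "I - J" "- J"] decisive_Compl[of J] assms(2) by auto
  ultimately have "f F \<noteq> b" using decisive_iff[of F b] by simp
  moreover have "f F \<in> {a, b, c}" using conservative[of F] by (auto simp: F_def)
  ultimately have "f F = a" using \<open>f F \<noteq> c\<close> by auto
  moreover have "{i. F i = a} = I \<inter> J" using abc by (auto simp: F_def)
  ultimately show ?thesis using decisive_iff[of F a] by simp
qed

lemma decisive_lessThan: "decisive {..<n}"
proof -
  have "decisive UNIV" using decisive_Compl[of "{}"] not_decisive_empty by simp
  then show ?thesis by (simp add: decisive_def)
qed

lemma projection: "\<exists>k<n. \<forall>F. f F = F k"
proof -
  obtain k where "k \<in> {..<n}" and k: "decisive {k}"
    using finite_ultrafilter_principal[of "{..<n}" decisive] decisive_lessThan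
      not_decisive_empty decisive_Int decisive_Compl by blast
  moreover have "f F = F k" for F
    using decisive_mono[OF _ k, of "{i. F i = F k}"] decisive_iff by auto
  ultimately show ?thesis by auto
qed

end

lemma (in collapse_compatible) constant_or_projection:
  "(\<exists>c. \<forall>F. f F = c) \<or> (\<exists>k<n. \<forall>F. f F = F k)"
proof (cases "\<exists>F. f F \<notin> F ` {..<n}")
  case True
  then show ?thesis using constant_if_not_conservative by blast
next
  case False
  then interpret conservative_collapse_compatible n f by unfold_locales blast
  show ?thesis using projection by blast
qed

lemma hext_leaf: "hext (leaf \<circ> h) (leaf a) = leaf (h a)"
  unfolding hext_def leaf_def by auto

lemma leaf_eq_iff: "leaf a = leaf b \<longleftrightarrow> a = b"
  unfolding leaf_def by auto

lemma WCP_on_letters: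
  assumes "WCP n g" and "h \<circ> h = h" and "length u = n" and "length v = n"
    and "map h u = map h v" and "g (map leaf u) = leaf a" and "g (map leaf v) = leaf b"
  shows "h a = h b"
proof -
  have "hext (leaf \<circ> h) (g (map leaf u)) = hext (leaf \<circ> h) (g (map leaf v))"
    using assms(1-5) unfolding WCP_def by blast
  then show ?thesis using assms(6,7) by (simp add: hext_leaf leaf_eq_iff)
qed

lemma collapse_compatible_if_WCP:
  fixes g :: "'a tree list \<Rightarrow> 'a tree" and f :: "(nat \<Rightarrow> 'a) \<Rightarrow> 'a"
  assumes "WCP n g" and letters: "\<And>F. g (map leaf (map F [0..<n])) = leaf (f F)"
    and "\<And>a b :: 'a. \<exists>c. c \<noteq> a \<and> c \<noteq> b"
  shows "collapse_compatible n f"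
proof
  fix s S and F G :: "nat \<Rightarrow> 'a"
  assume "s \<in> S" and agree: "\<forall>i<n. F i = G i \<or> F i \<in> S \<and> G i \<in> S"
  define h where "h x = (if x \<in> S then s else x)" for x
  have "h \<circ> h = h" using \<open>s \<in> S\<close> by (auto simp: h_def)
  moreover have "map h (map F [0..<n]) = map h (map G [0..<n])" using agree by (auto simp: h_def)
  ultimately have "h (f F) = h (f G)"
    by (intro WCP_on_letters[OF assms(1), of h "map F [0..<n]" "map G [0..<n]"] letters) simp_all
  then show "f F = f G \<or> f F \<in> S \<and> f G \<in> S"
    using \<open>s \<in> S\<close> by (auto simp: h_def split: if_splits)
qed (use assms(3) in blast)

lemma third_element:
  assumes "card (UNIV :: 'a::finite set) \<ge> 3"
  shows "\<exists>c::'a. c \<noteq> a \<and> c \<noteq> b"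
proof (rule ccontr)
  assume "\<not> ?thesis"
  then have "card (UNIV :: 'a set) \<le> card {a, b}" by (intro card_mono) auto
  also have "\<dots> \<le> 2" by (simp add: card_insert_if)
  finally show False using assms by simp
qed

theorem mainTheorem9:
  fixes g :: "'a::finite tree list \<Rightarrow> 'a tree" and n :: nat
  assumes "card (UNIV :: 'a set) \<ge> 3"
    and "n \<ge> 1"
    and "\<forall>ts. length ts = n \<and> (\<forall>t\<in>set ts. is_tree t) \<longrightarrow> is_tree (g ts)"
    and "WCP n g"
    and "\<forall>u. length u = n \<longrightarrow> (\<exists>a. g (map leaf u) = leaf a)"
  shows "(\<exists>c. \<forall>u. length u = n \<longrightarrow> g (map leaf u) = c)
       \<or> (\<exists>i<n. \<forall>u. length u = n \<longrightarrow> g (map leaf u) = leaf (u ! i))"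
proof -
  have "\<forall>F. \<exists>a. g (map leaf (map F [0..<n])) = leaf a"
    using assms(5) by (metis diff_zero length_map length_upt)
  from choice[OF this] obtain f where f: "\<forall>F. g (map leaf (map F [0..<n])) = leaf (f F)"
    by blast
  interpret collapse_compatible n f
    using collapse_compatible_if_WCP[OF assms(4) f[rule_format]] third_element[OF assms(1)] by blast
  have letters: "g (map leaf u) = leaf (f (nth u))" if "length u = n" for u
  proof -
    have "map (nth u) [0..<n] = u" unfolding that[symmetric] by (rule map_nth)
    then show ?thesis using f[rule_format, of "nth u"] by (simp only:)
  qed
  show ?thesis using constant_or_projection letters by auto
qed

end
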